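(* Let $n\ge1$ and let $\gamma_{n,k}^S$ be the integers defined by $$\sum_{\pi\in\mathfrak{S}_n(2413,3142)}t^{\mathrm{des}(\pi)}=\sum_{k=0}^{\lfloor\frac{n-1}{2}\rfloor}\gamma_{n,k}^S\, t^k (1+t)^{n-1-2k}.$$ Then $$\gamma_{n,k}^S=\sum_{T\in\mathfrak{T}_n,\ r_{o}(T)=n-1-2k} 2^{r_{e}(T)}.$$
   Context: $\mathfrak{S}_n(2413,3142)$ is the set of permutations of $[n]$ avoiding the patterns $2413$ and $3142$; $\mathrm{des}(\pi)=\#\{i\in[n-1]:\pi_i>\pi_{i+1}\}$. A binary tree is either empty or consists of a root with a left and a right subtree, both binary trees; $\mathfrak{T}_n$ is the set of (unlabelled) binary trees with $n-1$ nodes. A right chain of a binary tree is a maximal sequence of nodes $v_1,\dots,v_l$ with $v_1$ the root or a left child and each $v_{j+1}$ the right child of $v_j$; $l$ is its length. $r_o(T)$ and $r_e(T)$ are the numbers of right chains of $T$ of odd and even length respectively. *)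

theory Defs
  imports Main "HOL-Library.Tree" "HOL-Computational_Algebra.Polynomial"
begin

definition perms :: "nat \<Rightarrow> nat list set" where
  "perms n = {\<pi>. distinct \<pi> \<and> set \<pi> = {1..n}}"

definition contains :: "nat list \<Rightarrow> nat list \<Rightarrow> bool" where
  "contains \<pi> \<sigma> \<longleftrightarrow> (\<exists>f::nat \<Rightarrow> nat.
      strict_mono_on {..<length \<sigma>} f \<and> (\<forall>a<length \<sigma>. f a < length \<pi>) \<and>
      (\<forall>a<length \<sigma>. \<forall>b<length \<sigma>. \<sigma> ! a < \<sigma> ! b \<longleftrightarrow> \<pi> ! f a < \<pi> ! f b))"

definition avoids :: "nat list \<Rightarrow> nat list \<Rightarrow> bool" where
  "avoids \<pi> \<sigma> \<longleftrightarrow> \<not> contains \<pi> \<sigma>"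

definition sep_perms :: "nat \<Rightarrow> nat list set" where
  "sep_perms n = {\<pi> \<in> perms n. avoids \<pi> [2,4,1,3] \<and> avoids \<pi> [3,1,4,2]}"

definition des :: "nat list \<Rightarrow> nat" where
  "des \<pi> = card {i. Suc i < length \<pi> \<and> \<pi> ! i > \<pi> ! Suc i}"

text \<open>Unlabelled binary trees are unit trees; T_n = trees with n-1 nodes.\<close>
definition btrees :: "nat \<Rightarrow> unit tree set" where
  "btrees n = {T. size T = n - 1}"

fun rlen :: "unit tree \<Rightarrow> nat" where
  "rlen Leaf = 0"
| "rlen (Node l x r) = Suc (rlen r)"

text \<open>The flag says whether the current node
  starts a chain (it is the root or a left child); a chain starting at v consists
  of v and its successive right children, hence has length rlen v.\<close>
fun chains :: "bool \<Rightarrow> unit tree \<Rightarrow> nat list" where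
  "chains b Leaf = []"
| "chains b (Node l x r) =
     (if b then [rlen (Node l x r)] else []) @ chains True l @ chains False r"

definition r_o :: "unit tree \<Rightarrow> nat" where
  "r_o T = length (filter odd (chains True T))"

definition r_e :: "unit tree \<Rightarrow> nat" where
  "r_e T = length (filter even (chains True T))"

end

theory Submission
  imports Defs "HOL-Computational_Algebra.Formal_Power_Series"
begin

text \<open>
  A separable permutation of length at least 2 is a direct sum \<sigma> \<oplus> \<tau> or a skew sum
  \<sigma> \<ominus> \<tau> of smaller separable ones, never both, and uniquely so once the first
  \<oplus>-block (resp. the last \<ominus>-block) is required to be indecomposable. As
  des (\<sigma> \<oplus> \<tau>) = des \<sigma> + des \<tau> and des (\<sigma> \<ominus> \<tau>) = des \<sigma> + des \<tau> + 1, the series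
  A = \<Sum> t^des(\<pi>) x^|\<pi>| satisfies A = x + (1 + t) x A + t x A^2 + t A^3.
  Weighting a right chain of length l by 2 t^(l/2) for even l and by t^((l-1)/2) (1 + t) for odd l,
  the weighted series P of binary trees satisfies a recursion along the right chain through the
  root which shows that x P satisfies the same cubic. The cubic has a unique solution without
  constant term, so A = x P. A tree T with r_o(T) = n - 1 - 2k has weight
  2^r_e(T) t^k (1 + t)^(n - 1 - 2k), and these polynomials are linearly independent.
\<close>

unbundle fps_syntax

lemma perms_length: "\<pi> \<in> perms n \<Longrightarrow> length \<pi> = n"
  unfolding perms_def using distinct_card by fastforce

lemma perms_nth: "\<pi> \<in> perms n \<Longrightarrow> i < n \<Longrightarrow> \<pi> ! i \<in> {1..n}"
  using nth_mem[of i \<pi>] perms_length[of \<pi> n] unfolding perms_def by simp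

lemma rev_perms_iff [simp]: "rev \<pi> \<in> perms n \<longleftrightarrow> \<pi> \<in> perms n"
  unfolding perms_def by simp

lemma finite_perms: "finite (perms n)"
proof (rule finite_subset)
  show "perms n \<subseteq> {xs. set xs \<subseteq> {1..n} \<and> length xs = n}"
    using perms_length unfolding perms_def by auto
  show "finite {xs. set xs \<subseteq> {1..n} \<and> length xs = n}"
    by (rule finite_lists_length_eq) simp
qed

lemma finite_sep_perms: "finite (sep_perms n)"
  using finite_perms unfolding sep_perms_def by simp

lemma sep_perms_perms: "\<pi> \<in> sep_perms n \<Longrightarrow> \<pi> \<in> perms n"
  unfolding sep_perms_def by simp

lemma nth_in_set_take_iff:
  assumes "distinct xs" "i < length xs"
  shows "xs ! i \<in> set (take k xs) \<longleftrightarrow> i < k"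
proof
  assume "xs ! i \<in> set (take k xs)"
  then obtain j where "j < length (take k xs)" "take k xs ! j = xs ! i"
    by (auto simp: in_set_conv_nth)
  then show "i < k"
    using assms nth_eq_iff_index_eq[of xs j i] by auto
next
  assume "i < k"
  then show "xs ! i \<in> set (take k xs)"
    using assms(2) nth_mem[of i "take k xs"] by simp
qed

lemma lower_part_eq_atLeastAtMost:
  fixes A B :: "nat set"
  assumes "A \<union> B = {1..n}" "A \<inter> B = {}" "card A = k" "\<forall>x\<in>A. \<forall>y\<in>B. x < y"
  shows "A = {1..k}"
proof -
  have fin: "finite A" "finite B"
    using finite_Un[of A B] assms(1) by simp_all
  have card_B: "card B = n - k"
    using card_Un_disjoint[OF fin assms(2)] assms(1,3) by simp
  have "A \<subseteq> {1..k}"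
  proof
    fix x assume x: "x \<in> A"
    then have "B \<subseteq> {x<..n}"
      using assms(1,4) by fastforce
    then have "n - k \<le> n - x"
      using card_B card_mono[of "{x<..n}" B] by simp
    moreover have "x \<in> {1..n}" "k \<le> n"
      using x assms(1,3) card_B card_mono[of "{1..n}" A] by auto
    ultimately show "x \<in> {1..k}"
      by (simp; arith)
  qed
  then show ?thesis
    using assms(3) fin(1) by (simp add: card_subset_eq)
qed

lemma perms_set_take_drop:
  assumes "\<pi> \<in> perms n"
  shows "set (take k \<pi>) \<union> set (drop k \<pi>) = {1..n}" "set (take k \<pi>) \<inter> set (drop k \<pi>) = {}"
proof -
  have "distinct (take k \<pi> @ drop k \<pi>)" "set (take k \<pi> @ drop k \<pi>) = {1..n}"
    using assms unfolding perms_def by simp_all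
  then show "set (take k \<pi>) \<union> set (drop k \<pi>) = {1..n}" "set (take k \<pi>) \<inter> set (drop k \<pi>) = {}"
    by (simp_all only: distinct_append set_append)
qed

lemma perms_prefix_below:
  assumes "\<pi> \<in> perms n" "k \<le> n" "\<forall>i<k. \<forall>j. k \<le> j \<and> j < n \<longrightarrow> \<pi> ! i < \<pi> ! j"
  shows "set (take k \<pi>) = {1..k}"
proof (rule lower_part_eq_atLeastAtMost[OF perms_set_take_drop[OF assms(1)]])
  have "distinct \<pi>" "length \<pi> = n"
    using assms(1) perms_length unfolding perms_def by auto
  then show "card (set (take k \<pi>)) = k"
    using assms(2) by (simp add: distinct_card)
  show "\<forall>x\<in>set (take k \<pi>). \<forall>y\<in>set (drop k \<pi>). x < y"
    using assms(3) \<open>length \<pi> = n\<close> by (auto simp: in_set_conv_nth)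
qed

lemma perms_take_high_iff:
  assumes "\<pi> \<in> perms n" "k \<le> n"
  shows "set (take k \<pi>) = {n - k + 1..n} \<longleftrightarrow> set (drop k \<pi>) = {1..n - k}"
proof -
  have "{n - k + 1..n} \<union> {1..n - k} = {1..n}" "{n - k + 1..n} \<inter> {1..n - k} = {}"
    using assms(2) by auto
  then show ?thesis
    using perms_set_take_drop[OF assms(1), of k] by blast
qed

lemma perms_insert_max:
  assumes "xs @ ys \<in> perms n"
  shows "xs @ Suc n # ys \<in> perms (Suc n)"
proof -
  have set: "set (xs @ ys) = {1..n}" and dist: "distinct (xs @ ys)"
    using assms unfolding perms_def by simp_all
  have "Suc n \<notin> set (xs @ ys)"
    by (simp only: set) simp
  then have "distinct (xs @ Suc n # ys)"
    using dist by auto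
  moreover have "set (xs @ Suc n # ys) = insert (Suc n) {1..n}"
    using set by auto
  ultimately show ?thesis
    unfolding perms_def by (simp add: atLeastAtMostSuc_conv)
qed

lemma perms_Suc_obtain_max:
  assumes "\<pi> \<in> perms (Suc n)"
  obtains xs ys where "\<pi> = xs @ Suc n # ys" "xs @ ys \<in> perms n"
proof -
  have "Suc n \<in> set \<pi>"
    using assms unfolding perms_def by simp
  then obtain xs ys where \<pi>: "\<pi> = xs @ Suc n # ys"
    by (meson split_list)
  moreover have "xs @ ys \<in> perms n"
  proof -
    have "distinct (xs @ Suc n # ys)" "set (xs @ Suc n # ys) = insert (Suc n) {1..n}"
      using assms unfolding \<pi> perms_def by (simp_all add: atLeastAtMostSuc_conv)
    then have "distinct (xs @ ys)" "Suc n \<notin> set (xs @ ys)" "insert (Suc n) (set (xs @ ys)) = insert (Suc n) {1..n}"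
      by auto
    moreover have "Suc n \<notin> {1..n}"
      by simp
    ultimately show ?thesis
      unfolding perms_def using insert_ident[of "Suc n" "set (xs @ ys)" "{1..n}"] by simp
  qed
  ultimately show thesis
    using that by blast
qed

lemma perms_two: "perms 2 = {[1,2], [2,1]}"
proof -
  have two: "{1..2::nat} = {1,2}"
    by (simp add: numeral_2_eq_2 atLeastAtMostSuc_conv insert_commute)
  have "\<pi> \<in> {[1,2], [2,1]}" if \<pi>: "\<pi> \<in> perms 2" for \<pi>
  proof -
    have "length \<pi> = Suc (Suc 0)"
      using perms_length[OF \<pi>] by simp
    then obtain x y where xy: "\<pi> = [x, y]"
      by (auto simp: length_Suc_conv)
    then have "x \<noteq> y" "{x, y} = {1, 2::nat}"
      using \<pi> two unfolding perms_def by simp_all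
    then show ?thesis
      unfolding xy by (simp add: doubleton_eq_iff)
  qed
  moreover have "[1,2] \<in> perms 2" "[2,1] \<in> perms 2"
    unfolding perms_def two by (simp_all add: insert_commute)
  ultimately show ?thesis
    by blast
qed

definition occurrence :: "nat list \<Rightarrow> nat list \<Rightarrow> (nat \<Rightarrow> nat) \<Rightarrow> bool" where
  "occurrence \<pi> \<sigma> f \<longleftrightarrow> strict_mono_on {..<length \<sigma>} f \<and> (\<forall>a<length \<sigma>. f a < length \<pi>) \<and>
     (\<forall>a<length \<sigma>. \<forall>b<length \<sigma>. \<sigma> ! a < \<sigma> ! b \<longleftrightarrow> \<pi> ! f a < \<pi> ! f b)"

lemma contains_iff_occurrence: "contains \<pi> \<sigma> \<longleftrightarrow> (\<exists>f. occurrence \<pi> \<sigma> f)"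
  unfolding contains_def occurrence_def ..

lemma contains_trans:
  assumes "contains \<pi> \<tau>" "contains \<tau> \<sigma>"
  shows "contains \<pi> \<sigma>"
proof -
  obtain g f where g: "occurrence \<pi> \<tau> g" and f: "occurrence \<tau> \<sigma> f"
    using assms unfolding contains_iff_occurrence by blast
  have "occurrence \<pi> \<sigma> (g \<circ> f)"
    using f g unfolding occurrence_def strict_mono_on_def by auto
  then show ?thesis
    unfolding contains_iff_occurrence by blast
qed

lemma avoids_mono: "contains \<pi> \<tau> \<Longrightarrow> avoids \<pi> \<sigma> \<Longrightarrow> avoids \<tau> \<sigma>"
  unfolding avoids_def using contains_trans by blast

lemma contains_map_strict_mono: "strict_mono_on (set \<tau>) h \<Longrightarrow> contains \<tau> (map h \<tau>)"
  unfolding contains_iff_occurrence occurrence_def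
  by (intro exI[of _ id]) (auto simp: strict_mono_on_def strict_mono_on_less)

lemma contains_take: "contains \<pi> (take k \<pi>)"
  unfolding contains_iff_occurrence occurrence_def
  by (intro exI[of _ id]) (auto simp: strict_mono_on_def)

lemma contains_drop: "contains \<pi> (drop k \<pi>)"
  unfolding contains_iff_occurrence occurrence_def
  by (intro exI[of _ "\<lambda>a. k + a"]) (auto simp: strict_mono_on_def)

lemma contains_delete: "contains \<pi> (take q \<pi> @ drop (Suc q) \<pi>)"
  unfolding contains_iff_occurrence occurrence_def
  by (intro exI[of _ "\<lambda>i. if i < q then i else Suc i"]) (auto simp: strict_mono_on_def nth_append min_def)

lemma contains_rev:
  assumes "contains \<pi> \<sigma>"
  shows "contains (rev \<pi>) (rev \<sigma>)"
proof -
  obtain f where f: "strict_mono_on {..<length \<sigma>} f" "\<forall>a<length \<sigma>. f a < length \<pi>"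
    "\<forall>a<length \<sigma>. \<forall>b<length \<sigma>. \<sigma> ! a < \<sigma> ! b \<longleftrightarrow> \<pi> ! f a < \<pi> ! f b"
    using assms unfolding contains_iff_occurrence occurrence_def by blast
  define g where "g a = length \<pi> - Suc (f (length \<sigma> - Suc a))" for a
  have rev_g: "rev \<pi> ! g a = \<pi> ! f (length \<sigma> - Suc a)" if "a < length \<sigma>" for a
  proof -
    have "f (length \<sigma> - Suc a) < length \<pi>"
      using f(2) that by simp
    then show ?thesis
      by (simp add: g_def rev_nth)
  qed
  have "occurrence (rev \<pi>) (rev \<sigma>) g"
    unfolding occurrence_def
  proof (intro conjI allI impI)
    show "strict_mono_on {..<length (rev \<sigma>)} g"
    proof (rule strict_mono_onI)
      fix a b assume "a \<in> {..<length (rev \<sigma>)}" "b \<in> {..<length (rev \<sigma>)}" "a < b"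
      then have "f (length \<sigma> - Suc b) < f (length \<sigma> - Suc a)"
        using f(1) by (intro strict_mono_onD[OF f(1)]) auto
      moreover have "f (length \<sigma> - Suc a) < length \<pi>"
        using f(2) \<open>a \<in> _\<close> by simp
      ultimately show "g a < g b"
        unfolding g_def by linarith
    qed
    show "g a < length (rev \<pi>)" if "a < length (rev \<sigma>)" for a
      using f(2) that by (auto simp: g_def)
    show "rev \<sigma> ! a < rev \<sigma> ! b \<longleftrightarrow> rev \<pi> ! g a < rev \<pi> ! g b"
      if "a < length (rev \<sigma>)" "b < length (rev \<sigma>)" for a b
    proof -
      have "length \<sigma> - Suc a < length \<sigma>" "length \<sigma> - Suc b < length \<sigma>"
        using that by auto
      then show ?thesis
        using that f(3) by (simp add: rev_g rev_nth)
    qed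
  qed
  then show ?thesis
    unfolding contains_iff_occurrence by blast
qed

lemma contains_length_le:
  assumes "contains \<pi> \<sigma>"
  shows "length \<sigma> \<le> length \<pi>"
proof -
  obtain f where f: "strict_mono_on {..<length \<sigma>} f" "\<forall>a<length \<sigma>. f a < length \<pi>"
    using assms unfolding contains_iff_occurrence occurrence_def by blast
  have "length \<sigma> = card (f ` {..<length \<sigma>})"
    using card_image[OF strict_mono_on_imp_inj_on[OF f(1)]] by simp
  also have "\<dots> \<le> card {..<length \<pi>}"
    by (rule card_mono) (use f(2) in auto)
  finally show ?thesis
    by simp
qed

lemma occurrence_append_left:
  assumes "occurrence (xs @ ys) \<sigma> f" "\<forall>a<length \<sigma>. f a < length xs"
  shows "occurrence xs \<sigma> f"
  using assms unfolding occurrence_def by (auto simp: nth_append)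

lemma occurrence_append_right:
  assumes "occurrence (xs @ ys) \<sigma> f" "\<forall>a<length \<sigma>. length xs \<le> f a"
  shows "occurrence ys \<sigma> (\<lambda>a. f a - length xs)"
  unfolding occurrence_def
proof (intro conjI allI impI)
  show "strict_mono_on {..<length \<sigma>} (\<lambda>a. f a - length xs)"
  proof (rule strict_mono_onI)
    fix r s assume "r \<in> {..<length \<sigma>}" "s \<in> {..<length \<sigma>}" "r < s"
    then have "f r < f s" "length xs \<le> f r"
      using assms strict_mono_onD[of _ f r s] unfolding occurrence_def by auto
    then show "f r - length xs < f s - length xs"
      by linarith
  qed
  show "f a - length xs < length ys" if "a < length \<sigma>" for a
    using assms that unfolding occurrence_def by fastforce
qed (use assms in \<open>auto simp: occurrence_def nth_append not_less[symmetric]\<close>)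

lemma contains_append_split:
  assumes "contains (xs @ ys) \<sigma>" "\<not> contains xs \<sigma>" "\<not> contains ys \<sigma>"
  obtains f k where "occurrence (xs @ ys) \<sigma> f" "0 < k" "k < length \<sigma>"
    "\<forall>a<length \<sigma>. f a < length xs \<longleftrightarrow> a < k"
proof -
  obtain f where occ: "occurrence (xs @ ys) \<sigma> f"
    using assms(1) unfolding contains_iff_occurrence by blast
  define k where "k = (LEAST a. a = length \<sigma> \<or> length xs \<le> f a)"
  have "k \<le> length \<sigma>"
    unfolding k_def by (rule Least_le) simp
  have below: "f a < length xs" if "a < k" for a
    using not_less_Least[of a "\<lambda>a. a = length \<sigma> \<or> length xs \<le> f a"] that \<open>k \<le> length \<sigma>\<close>
    unfolding k_def by auto
  have above: "length xs \<le> f a" if "k \<le> a" "a < length \<sigma>" for a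
  proof -
    have "k = length \<sigma> \<or> length xs \<le> f k"
      unfolding k_def by (rule LeastI[of _ "length \<sigma>"]) simp
    then have "length xs \<le> f k"
      using that by simp
    also have "f k \<le> f a"
    proof (cases "k = a")
      case False
      then show ?thesis
        using occ that strict_mono_onD[of "{..<length \<sigma>}" f k a] unfolding occurrence_def by simp
    qed simp
    finally show ?thesis .
  qed
  have "k \<noteq> length \<sigma>"
    using occurrence_append_left[OF occ] below assms(2) unfolding contains_iff_occurrence by auto
  moreover have "k \<noteq> 0"
  proof
    assume "k = 0"
    then have "\<forall>a<length \<sigma>. length xs \<le> f a"
      using above by simp
    then show False
      using occurrence_append_right[OF occ] assms(3) unfolding contains_iff_occurrence by blast
  qed
  moreover have "\<forall>a<length \<sigma>. f a < length xs \<longleftrightarrow> a < k"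
    using below above by (meson not_le)
  ultimately show thesis
    using that occ \<open>k \<le> length \<sigma>\<close> by simp
qed

lemma contains_2413:
  assumes "i0 < i1" "i1 < i2" "i2 < i3" "i3 < length \<pi>"
    and "\<pi> ! i2 < \<pi> ! i0" "\<pi> ! i0 < \<pi> ! i3" "\<pi> ! i3 < \<pi> ! i1"
  shows "contains \<pi> [2,4,1,3]"
  unfolding contains_def
proof (intro exI[of _ "(!) [i0,i1,i2,i3]"] conjI)
  have all4: "(\<forall>a<length [2,4,1,3::nat]. P a) \<longleftrightarrow> P 0 \<and> P 1 \<and> P 2 \<and> P 3" for P
    by (auto simp: less_Suc_eq numeral_eq_Suc)
  show "strict_mono_on {..<length [2,4,1,3::nat]} ((!) [i0,i1,i2,i3])"
    using assms(1-3) by (auto simp: strict_mono_on_def less_Suc_eq numeral_eq_Suc)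
  show "\<forall>a<length [2,4,1,3::nat]. [i0,i1,i2,i3] ! a < length \<pi>"
    unfolding all4 using assms(1-4) by simp
  show "\<forall>a<length [2,4,1,3::nat]. \<forall>b<length [2,4,1,3::nat].
      [2,4,1,3::nat] ! a < [2,4,1,3] ! b \<longleftrightarrow> \<pi> ! ([i0,i1,i2,i3] ! a) < \<pi> ! ([i0,i1,i2,i3] ! b)"
    unfolding all4 using assms(5-7) by auto
qed

lemma rev_sep_perms_iff [simp]: "rev \<pi> \<in> sep_perms n \<longleftrightarrow> \<pi> \<in> sep_perms n"
proof -
  have "avoids (rev \<pi>) (rev p) \<longleftrightarrow> avoids \<pi> p" for p
    using contains_rev[of \<pi> p] contains_rev[of "rev \<pi>" "rev p"] unfolding avoids_def by auto
  from this[of "[2,4,1,3]"] this[of "[3,1,4,2]"] show ?thesis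
    unfolding sep_perms_def by auto
qed

lemma sep_perms_one: "sep_perms 1 = {[1]}"
proof -
  have "perms 1 = {[1]}"
  proof
    show "perms 1 \<subseteq> {[1]}"
    proof
      fix \<pi> assume \<pi>: "\<pi> \<in> perms 1"
      then obtain x where "\<pi> = [x]"
        using perms_length[OF \<pi>] by (auto simp: length_Suc_conv)
      then show "\<pi> \<in> {[1]}"
        using \<pi> unfolding perms_def by simp
    qed
  qed (simp add: perms_def)
  moreover have "avoids [1] p" if "length p = 4" for p
    using contains_length_le[of "[1]" p] that unfolding avoids_def by fastforce
  then have "avoids [1] [2,4,1,3]" "avoids [1] [3,1,4,2]"
    by simp_all
  ultimately show ?thesis
    unfolding sep_perms_def by auto
qed

section \<open>Direct sums and skew sums\<close>

definition direct_sum :: "nat list \<Rightarrow> nat list \<Rightarrow> nat list" where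
  "direct_sum \<sigma> \<tau> = \<sigma> @ map (\<lambda>x. x + length \<sigma>) \<tau>"

definition skew_sum :: "nat list \<Rightarrow> nat list \<Rightarrow> nat list" where
  "skew_sum \<sigma> \<tau> = map (\<lambda>x. x + length \<tau>) \<sigma> @ \<tau>"

lemma rev_direct_sum: "rev (direct_sum \<sigma> \<tau>) = skew_sum (rev \<tau>) (rev \<sigma>)"
  by (simp add: direct_sum_def skew_sum_def rev_map)

lemma direct_sum_perms:
  assumes "\<sigma> \<in> perms a" "\<tau> \<in> perms b"
  shows "direct_sum \<sigma> \<tau> \<in> perms (a + b)"
proof -
  have "length \<sigma> = a" "set \<sigma> = {1..a}" "set \<tau> = {1..b}" "distinct \<sigma>" "distinct \<tau>"
    using assms perms_length unfolding perms_def by auto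
  moreover have "{1..a} \<union> {a + 1..a + b} = {1..a + b}"
    by auto
  ultimately show ?thesis
    unfolding perms_def direct_sum_def by (auto simp: distinct_map inj_on_def add.commute)
qed

definition sum_decomposable :: "nat list \<Rightarrow> bool" where
  "sum_decomposable \<pi> \<longleftrightarrow> (\<exists>k. 0 < k \<and> k < length \<pi> \<and> set (take k \<pi>) = {1..k})"

definition skew_decomposable :: "nat list \<Rightarrow> bool" where
  "skew_decomposable \<pi> \<longleftrightarrow>
     (\<exists>k. 0 < k \<and> k < length \<pi> \<and> set (take k \<pi>) = {length \<pi> - k + 1..length \<pi>})"

lemma sum_decomposable_rev:
  assumes "\<pi> \<in> perms n"
  shows "sum_decomposable (rev \<pi>) \<longleftrightarrow> skew_decomposable \<pi>"
proof -
  have len: "length \<pi> = n"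
    using assms by (rule perms_length)
  have "sum_decomposable (rev \<pi>) \<longleftrightarrow> (\<exists>j. 0 < j \<and> j < n \<and> set (drop (n - j) \<pi>) = {1..n - (n - j)})"
    unfolding sum_decomposable_def using len by (auto simp: take_rev)
  also have "\<dots> \<longleftrightarrow> (\<exists>k. 0 < k \<and> k < n \<and> set (drop k \<pi>) = {1..n - k})"
  proof
    assume "\<exists>j. 0 < j \<and> j < n \<and> set (drop (n - j) \<pi>) = {1..n - (n - j)}"
    then obtain j where "0 < j" "j < n" "set (drop (n - j) \<pi>) = {1..n - (n - j)}"
      by blast
    then show "\<exists>k. 0 < k \<and> k < n \<and> set (drop k \<pi>) = {1..n - k}"
      by (intro exI[of _ "n - j"]) auto
  next
    assume "\<exists>k. 0 < k \<and> k < n \<and> set (drop k \<pi>) = {1..n - k}"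
    then obtain k where "0 < k" "k < n" "set (drop k \<pi>) = {1..n - k}"
      by blast
    then show "\<exists>j. 0 < j \<and> j < n \<and> set (drop (n - j) \<pi>) = {1..n - (n - j)}"
      by (intro exI[of _ "n - k"]) (auto simp: diff_diff_cancel)
  qed
  also have "\<dots> \<longleftrightarrow> skew_decomposable \<pi>"
    unfolding skew_decomposable_def len using perms_take_high_iff[OF assms] by (meson less_imp_le)
  finally show ?thesis .
qed

lemma not_sum_and_skew_decomposable:
  assumes "\<pi> \<in> perms n" "sum_decomposable \<pi>" "skew_decomposable \<pi>"
  shows False
proof -
  have len: "length \<pi> = n"
    using assms(1) by (rule perms_length)
  obtain k where k: "0 < k" "k < n" "set (take k \<pi>) = {1..k}"
    using assms(2) len unfolding sum_decomposable_def by auto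
  obtain j where j: "0 < j" "j < n" "set (take j \<pi>) = {n - j + 1..n}"
    using assms(3) len unfolding skew_decomposable_def by auto
  show False
  proof (cases "k \<le> j")
    case True
    then have "1 \<in> set (take j \<pi>)"
      using k set_take_subset_set_take[of k j \<pi>] by auto
    then show False
      using j by simp
  next
    case False
    then have "n \<in> set (take k \<pi>)"
      using j set_take_subset_set_take[of j k \<pi>] by auto
    then show False
      using k by simp
  qed
qed

lemma direct_sum_split:
  assumes perm: "\<pi> \<in> perms n" and "k \<le> n" and low: "set (take k \<pi>) = {1..k}"
  shows "take k \<pi> \<in> perms k" "map (\<lambda>x. x - k) (drop k \<pi>) \<in> perms (n - k)"
    and "direct_sum (take k \<pi>) (map (\<lambda>x. x - k) (drop k \<pi>)) = \<pi>"
proof -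
  have len: "length \<pi> = n" and dist: "distinct \<pi>"
    using perm perms_length unfolding perms_def by auto
  have "set (drop k \<pi>) = {1..n} - {1..k}"
    using perms_set_take_drop[OF perm, of k] low by blast
  also have "\<dots> = (\<lambda>x. x + k) ` {1..n - k}"
    using \<open>k \<le> n\<close> by auto
  finally have high: "set (drop k \<pi>) = (\<lambda>x. x + k) ` {1..n - k}" .
  show "take k \<pi> \<in> perms k"
    using dist low unfolding perms_def by simp
  have "inj_on (\<lambda>x. x - k) (set (drop k \<pi>))"
    unfolding high by (auto simp: inj_on_def)
  moreover have "(\<lambda>x. x - k) ` set (drop k \<pi>) = {1..n - k}"
    unfolding high image_image by simp
  ultimately show "map (\<lambda>x. x - k) (drop k \<pi>) \<in> perms (n - k)"
    using dist unfolding perms_def by (simp add: distinct_map)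
  have "map (\<lambda>x. x - k + k) (drop k \<pi>) = drop k \<pi>"
    by (rule map_idI) (use high in auto)
  then show "direct_sum (take k \<pi>) (map (\<lambda>x. x - k) (drop k \<pi>)) = \<pi>"
    using \<open>k \<le> n\<close> len by (simp add: direct_sum_def comp_def)
qed

lemma sum_indecomposable_patterns:
  "[2,4,1,3] \<in> perms 4" "\<not> sum_decomposable [2,4,1,3]"
  "[3,1,4,2] \<in> perms 4" "\<not> sum_decomposable [3,1,4,2]"
proof -
  have k: "k = 1 \<or> k = 2 \<or> k = 3" if "0 < k" "k < 4" for k :: nat
    using that by linarith
  show "[2,4,1,3] \<in> perms 4" "[3,1,4,2] \<in> perms 4"
    unfolding perms_def by auto
  show "\<not> sum_decomposable [2,4,1,3]" "\<not> sum_decomposable [3,1,4,2]"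
    unfolding sum_decomposable_def
    by (auto dest!: k dest: equalityD1[THEN subsetD[of _ _ 3]] equalityD1[THEN subsetD[of _ _ 4]]
        equalityD2[THEN subsetD[of _ _ 1]])
qed

lemma avoids_direct_sum:
  assumes "\<sigma> \<in> perms a" "\<tau> \<in> perms b" "p \<in> perms m" "\<not> sum_decomposable p"
    and "avoids \<sigma> p" "avoids \<tau> p"
  shows "avoids (direct_sum \<sigma> \<tau>) p"
  unfolding avoids_def
proof
  assume "contains (direct_sum \<sigma> \<tau>) p"
  have len: "length \<sigma> = a" "length \<tau> = b" "length p = m"
    using assms(1-3) by (simp_all add: perms_length)
  have occ: "contains (\<sigma> @ map (\<lambda>x. x + a) \<tau>) p"
    using \<open>contains (direct_sum \<sigma> \<tau>) p\<close> len(1) by (simp add: direct_sum_def)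
  have "strict_mono_on (set \<tau>) (\<lambda>x. x + a)"
    by (simp add: strict_mono_on_def)
  then have "\<not> contains (map (\<lambda>x. x + a) \<tau>) p"
    using assms(6) avoids_mono[OF contains_map_strict_mono] unfolding avoids_def by blast
  moreover have "\<not> contains \<sigma> p"
    using assms(5) unfolding avoids_def .
  ultimately obtain f k where "occurrence (\<sigma> @ map (\<lambda>x. x + a) \<tau>) p f"
      and k: "0 < k" "k < length p" and split: "\<forall>i<length p. f i < length \<sigma> \<longleftrightarrow> i < k"
    using contains_append_split[OF occ] by metis
  then have f: "\<forall>i<m. f i < a + b"
    "\<forall>i<m. \<forall>j<m. p ! i < p ! j \<longleftrightarrow> (\<sigma> @ map (\<lambda>x. x + a) \<tau>) ! f i < (\<sigma> @ map (\<lambda>x. x + a) \<tau>) ! f j"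
    using len unfolding occurrence_def by simp_all
  have "p ! i < p ! j" if "i < k" "k \<le> j" "j < m" for i j
  proof -
    have "f i < a" "a \<le> f j" "f j < a + b"
      using split[rule_format, of i] split[rule_format, of j] f(1)[rule_format, of j] that k(2) len
      by simp_all
    then have "\<sigma> ! f i \<le> a" "f j - a < b" "1 \<le> \<tau> ! (f j - a)"
      using perms_nth[OF assms(1)] perms_nth[OF assms(2)] by auto
    then have "(\<sigma> @ map (\<lambda>x. x + a) \<tau>) ! f i < (\<sigma> @ map (\<lambda>x. x + a) \<tau>) ! f j"
      using \<open>f i < a\<close> \<open>a \<le> f j\<close> len by (simp add: nth_append)
    then show ?thesis
      using f(2) that k(2) len by simp
  qed
  then have "set (take k p) = {1..k}"
    using perms_prefix_below[OF assms(3)] k(2) len by simp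
  then show False
    using assms(4) k unfolding sum_decomposable_def by blast
qed

lemma sep_perms_direct_sum:
  assumes "\<sigma> \<in> sep_perms a" "\<tau> \<in> sep_perms b"
  shows "direct_sum \<sigma> \<tau> \<in> sep_perms (a + b)"
proof -
  have "\<sigma> \<in> perms a" "\<tau> \<in> perms b"
    and "avoids \<sigma> [2,4,1,3]" "avoids \<tau> [2,4,1,3]" "avoids \<sigma> [3,1,4,2]" "avoids \<tau> [3,1,4,2]"
    using assms unfolding sep_perms_def by simp_all
  then show ?thesis
    unfolding sep_perms_def
    using direct_sum_perms avoids_direct_sum[OF _ _ sum_indecomposable_patterns(1,2)]
      avoids_direct_sum[OF _ _ sum_indecomposable_patterns(3,4)] by simp
qed

lemma sep_perms_direct_sum_parts:
  assumes "direct_sum \<sigma> \<tau> \<in> sep_perms (a + b)" "\<sigma> \<in> perms a" "\<tau> \<in> perms b"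
  shows "\<sigma> \<in> sep_perms a" "\<tau> \<in> sep_perms b"
proof -
  have len: "length \<sigma> = a"
    using assms(2) by (rule perms_length)
  have "contains (direct_sum \<sigma> \<tau>) \<sigma>"
    using contains_take[of "direct_sum \<sigma> \<tau>" a] len by (simp add: direct_sum_def)
  then show "\<sigma> \<in> sep_perms a"
    using assms(1,2) avoids_mono unfolding sep_perms_def by blast
  have "contains (map (\<lambda>x. x + a) \<tau>) (map (\<lambda>x. x - a) (map (\<lambda>x. x + a) \<tau>))"
    by (rule contains_map_strict_mono) (auto simp: strict_mono_on_def)
  then have "contains (drop a (direct_sum \<sigma> \<tau>)) \<tau>"
    using len by (simp add: direct_sum_def comp_def)
  then have "contains (direct_sum \<sigma> \<tau>) \<tau>"
    by (rule contains_trans[OF contains_drop])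
  then show "\<tau> \<in> sep_perms b"
    using assms(1,3) avoids_mono unfolding sep_perms_def by blast
qed

section \<open>Decomposition of separable permutations\<close>

text \<open>
  An inversion P ! j < P ! i with i < q \<le> j < k, together with the first entry after the block
  (which exceeds k) and the inserted maximum at position q, forms a 2413.
\<close>

lemma insert_max_low_prefix:
  assumes perm: "xs @ ys \<in> perms n" and av: "avoids (xs @ Suc n # ys) [2,4,1,3]"
    and k: "length xs < k" "k < n" "set (take k (xs @ ys)) = {1..k}"
  shows "set xs = {1..length xs}"
proof -
  define P \<pi> q where "P = xs @ ys" and "\<pi> = xs @ Suc n # ys" and "q = length xs"
  have P: "P \<in> perms n" "distinct P" "length P = n" "set (take k P) = {1..k}"
    using perm perms_length[OF perm] k(3) unfolding P_def perms_def by simp_all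
  have "P ! i < P ! j" if "i < q" "q \<le> j" "j < k" for i j
  proof (rule ccontr)
    assume "\<not> P ! i < P ! j"
    moreover have "P ! i \<noteq> P ! j"
      using P(2,3) that k(2) by (simp add: nth_eq_iff_index_eq)
    moreover have "P ! i \<in> {1..k}" "P ! k \<notin> {1..k}" "P ! k \<in> {1..n}"
      using nth_in_set_take_iff[OF P(2), of i k] nth_in_set_take_iff[OF P(2), of k k]
        perms_nth[OF P(1) k(2)] P(3,4) that k(2) by simp_all
    moreover have "\<pi> ! i = P ! i" "\<pi> ! q = Suc n" "\<pi> ! Suc j = P ! j" "\<pi> ! Suc k = P ! k"
      using that k(1) by (simp_all add: P_def \<pi>_def q_def nth_append Suc_diff_le)
    moreover have "length \<pi> = Suc n"
      using P(3) by (simp add: P_def \<pi>_def)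
    ultimately have "contains \<pi> [2,4,1,3]"
      using that k(2) by (intro contains_2413[of i q "Suc j" "Suc k"]) simp_all
    then show False
      using av by (simp add: \<pi>_def avoids_def)
  qed
  moreover have "take k P \<in> perms k"
    using distinct_take[OF P(2), of k] P(4) unfolding perms_def by simp
  ultimately have "set (take q (take k P)) = {1..q}"
    using perms_prefix_below[of "take k P" k q] k(1,2) P(3) by (simp add: q_def)
  then show ?thesis
    using k(1) by (simp add: P_def q_def)
qed

lemma insert_max_sum_decomposable:
  assumes perm: "xs @ ys \<in> perms n" and dec: "sum_decomposable (xs @ ys)"
    and av: "avoids (xs @ Suc n # ys) [2,4,1,3]"
  shows "sum_decomposable (xs @ Suc n # ys) \<or> skew_decomposable (xs @ Suc n # ys)"
proof -
  have len: "length (xs @ Suc n # ys) = Suc n"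
    using perms_length[OF perm] by simp
  obtain k where k: "0 < k" "k < n" "set (take k (xs @ ys)) = {1..k}"
    using dec perms_length[OF perm] unfolding sum_decomposable_def by auto
  consider "k \<le> length xs" | "xs = []" | "xs \<noteq> []" "length xs < k"
    by linarith
  then show ?thesis
  proof cases
    case 1
    then have "take k (xs @ Suc n # ys) = take k (xs @ ys)"
      by simp
    then show ?thesis
      unfolding sum_decomposable_def using k len by (intro disjI1 exI[of _ k]) simp
  next
    case 2
    then have "take 1 (xs @ Suc n # ys) = [Suc n]"
      by simp
    then show ?thesis
      unfolding skew_decomposable_def using k len by (intro disjI2 exI[of _ 1]) simp
  next
    case 3
    then have "set (take (length xs) (xs @ Suc n # ys)) = {1..length xs}"
      using insert_max_low_prefix[OF perm av] k by simp
    then show ?thesis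
      unfolding sum_decomposable_def using 3 k(2) len by (intro disjI1 exI[of _ "length xs"]) simp
  qed
qed

text \<open>Reversal exchanges \<oplus> with \<ominus> and 2413 with 3142.\<close>

lemma insert_max_skew_decomposable:
  assumes perm: "xs @ ys \<in> perms n" and dec: "skew_decomposable (xs @ ys)"
    and av: "avoids (xs @ Suc n # ys) [3,1,4,2]"
  shows "sum_decomposable (xs @ Suc n # ys) \<or> skew_decomposable (xs @ Suc n # ys)"
proof -
  have "rev ys @ rev xs \<in> perms n" "sum_decomposable (rev ys @ rev xs)"
    using perm dec sum_decomposable_rev[OF perm] rev_perms_iff[of "xs @ ys" n] by simp_all
  moreover have "avoids (rev ys @ Suc n # rev xs) [2,4,1,3]"
    using av contains_rev[of "rev ys @ Suc n # rev xs" "[2,4,1,3]"] unfolding avoids_def by auto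
  ultimately have "sum_decomposable (rev (xs @ Suc n # ys)) \<or> skew_decomposable (rev (xs @ Suc n # ys))"
    using insert_max_sum_decomposable[of "rev ys" "rev xs" n] by simp
  moreover have perm': "xs @ Suc n # ys \<in> perms (Suc n)"
    using perm by (rule perms_insert_max)
  ultimately show ?thesis
    using sum_decomposable_rev[OF perm'] sum_decomposable_rev[of "rev (xs @ Suc n # ys)" "Suc n"]
      rev_perms_iff[of "xs @ Suc n # ys" "Suc n"] by auto
qed

theorem sep_perms_decomposable:
  assumes "2 \<le> n" "\<pi> \<in> sep_perms n"
  shows "sum_decomposable \<pi> \<or> skew_decomposable \<pi>"
  using assms
proof (induction n arbitrary: \<pi> rule: nat_induct_at_least)
  case base
  then have "\<pi> = [1,2] \<or> \<pi> = [2,1]"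
    using perms_two sep_perms_perms by blast
  then show ?case
    unfolding sum_decomposable_def skew_decomposable_def by (auto intro!: exI[of _ 1])
next
  case (Suc n)
  obtain xs ys where \<pi>: "\<pi> = xs @ Suc n # ys" and perm: "xs @ ys \<in> perms n"
    using perms_Suc_obtain_max sep_perms_perms[OF Suc.prems] by blast
  have av: "avoids \<pi> [2,4,1,3]" "avoids \<pi> [3,1,4,2]"
    using Suc.prems unfolding sep_perms_def by simp_all
  have "contains \<pi> (xs @ ys)"
    using contains_delete[of \<pi> "length xs"] unfolding \<pi> by simp
  then have "xs @ ys \<in> sep_perms n"
    using perm av avoids_mono unfolding sep_perms_def by blast
  then have "sum_decomposable (xs @ ys) \<or> skew_decomposable (xs @ ys)"
    by (rule Suc.IH)
  then show ?case
    using insert_max_sum_decomposable[OF perm] insert_max_skew_decomposable[OF perm] av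
    unfolding \<pi> by blast
qed

definition sep_sum_indecomposables :: "nat \<Rightarrow> nat list set" where
  "sep_sum_indecomposables n = {\<pi> \<in> sep_perms n. \<not> sum_decomposable \<pi>}"

definition sep_skew_indecomposables :: "nat \<Rightarrow> nat list set" where
  "sep_skew_indecomposables n = {\<pi> \<in> sep_perms n. \<not> skew_decomposable \<pi>}"

lemma sum_decomposable_direct_sum:
  assumes "\<sigma> \<in> perms a" "\<tau> \<in> perms b" "0 < a" "0 < b"
  shows "sum_decomposable (direct_sum \<sigma> \<tau>)"
proof -
  have "length \<sigma> = a" "length \<tau> = b" "set \<sigma> = {1..a}"
    using assms(1,2) perms_length unfolding perms_def by auto
  then show ?thesis
    unfolding sum_decomposable_def direct_sum_def using assms(3,4) by (intro exI[of _ a]) simp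
qed

lemma direct_sum_prefix_decomposable:
  assumes "direct_sum \<sigma> \<tau> = direct_sum \<sigma>' \<tau>'" "\<sigma> \<in> perms a" "\<sigma>' \<in> perms a'" "0 < a" "a < a'"
  shows "sum_decomposable \<sigma>'"
proof -
  have "length \<sigma> = a" "length \<sigma>' = a'"
    using assms(2,3) perms_length by auto
  then have "take a (direct_sum \<sigma> \<tau>) = \<sigma>" "take a (direct_sum \<sigma>' \<tau>') = take a \<sigma>'"
    using assms(5) by (simp_all add: direct_sum_def)
  then have "take a \<sigma>' = \<sigma>"
    using assms(1) by simp
  then show ?thesis
    unfolding sum_decomposable_def using assms(2,4,5) \<open>length \<sigma>' = a'\<close>
    by (intro exI[of _ a]) (simp add: perms_def)
qed

lemma direct_sum_indecomposable_inj:
  assumes eq: "direct_sum \<sigma> \<tau> = direct_sum \<sigma>' \<tau>'"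
    and perms: "\<sigma> \<in> perms a" "\<sigma>' \<in> perms a'" "0 < a" "0 < a'"
    and indec: "\<not> sum_decomposable \<sigma>" "\<not> sum_decomposable \<sigma>'"
  shows "a = a'" "\<sigma> = \<sigma>'" "\<tau> = \<tau>'"
proof -
  show "a = a'"
    using direct_sum_prefix_decomposable[OF eq perms(1,2)]
      direct_sum_prefix_decomposable[OF eq[symmetric] perms(2,1)] perms(3,4) indec
    by (meson linorder_neqE_nat)
  then show "\<sigma> = \<sigma>'"
    using arg_cong[OF eq, of "take a"] perms perms_length by (simp add: direct_sum_def)
  show "\<tau> = \<tau>'"
    using arg_cong[OF eq, of "drop a"] \<open>a = a'\<close> perms perms_length
    by (simp add: direct_sum_def inj_map_eq_map inj_on_def)
qed

lemma sum_decomposableE: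
  assumes sep: "\<pi> \<in> sep_perms n" and dec: "sum_decomposable \<pi>"
  obtains k \<sigma> \<tau> where "k \<in> {1..<n}" "\<sigma> \<in> sep_sum_indecomposables k" "\<tau> \<in> sep_perms (n - k)"
    "\<pi> = direct_sum \<sigma> \<tau>"
proof -
  have perm: "\<pi> \<in> perms n"
    using sep by (rule sep_perms_perms)
  define Q where "Q k \<longleftrightarrow> 0 < k \<and> k < n \<and> set (take k \<pi>) = {1..k}" for k
  define k where "k = (LEAST k. Q k)"
  have "Q k"
    using dec perms_length[OF perm] LeastI_ex[of Q] unfolding k_def Q_def sum_decomposable_def by auto
  then have k: "0 < k" "k < n" "set (take k \<pi>) = {1..k}"
    unfolding Q_def by simp_all
  define \<sigma> \<tau> where "\<sigma> = take k \<pi>" and "\<tau> = map (\<lambda>x. x - k) (drop k \<pi>)"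
  have parts: "\<sigma> \<in> perms k" "\<tau> \<in> perms (n - k)" "direct_sum \<sigma> \<tau> = \<pi>"
    using direct_sum_split[OF perm _ k(3)] k(2) unfolding \<sigma>_def \<tau>_def by simp_all
  then have sep_parts: "\<sigma> \<in> sep_perms k" "\<tau> \<in> sep_perms (n - k)"
    using sep_perms_direct_sum_parts[of \<sigma> \<tau> k "n - k"] sep k(2) by simp_all
  have "\<not> sum_decomposable \<sigma>"
  proof
    assume "sum_decomposable \<sigma>"
    then obtain j where "0 < j" "j < k" "set (take j \<sigma>) = {1..j}"
      unfolding sum_decomposable_def using parts(1) perms_length by auto
    then have "Q j"
      using k(2) unfolding Q_def \<sigma>_def by simp
    then show False
      using not_less_Least[of j Q] \<open>j < k\<close> unfolding k_def by blast
  qed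
  then show thesis
    using that[of k \<sigma> \<tau>] k sep_parts parts(3) unfolding sep_sum_indecomposables_def by simp
qed

lemma bij_betw_direct_sum:
  "bij_betw (\<lambda>(a, \<sigma>, \<tau>). direct_sum \<sigma> \<tau>)
     (SIGMA a:{1..<n}. sep_sum_indecomposables a \<times> sep_perms (n - a))
     {\<pi> \<in> sep_perms n. sum_decomposable \<pi>}"
proof (rule bij_betw_imageI)
  show "inj_on (\<lambda>(a, \<sigma>, \<tau>). direct_sum \<sigma> \<tau>) (SIGMA a:{1..<n}. sep_sum_indecomposables a \<times> sep_perms (n - a))"
  proof (rule inj_onI)
    fix x y
    assume "x \<in> (SIGMA a:{1..<n}. sep_sum_indecomposables a \<times> sep_perms (n - a))"
      and "y \<in> (SIGMA a:{1..<n}. sep_sum_indecomposables a \<times> sep_perms (n - a))"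
      and xy: "(\<lambda>(a, \<sigma>, \<tau>). direct_sum \<sigma> \<tau>) x = (\<lambda>(a, \<sigma>, \<tau>). direct_sum \<sigma> \<tau>) y"
    moreover obtain a \<sigma> \<tau> a' \<sigma>' \<tau>' where x: "x = (a, \<sigma>, \<tau>)" and y: "y = (a', \<sigma>', \<tau>')"
      using prod_cases3 by metis
    ultimately have "direct_sum \<sigma> \<tau> = direct_sum \<sigma>' \<tau>'" "\<sigma> \<in> perms a" "\<sigma>' \<in> perms a'" "0 < a" "0 < a'"
      "\<not> sum_decomposable \<sigma>" "\<not> sum_decomposable \<sigma>'"
      unfolding sep_sum_indecomposables_def sep_perms_def by auto
    then show "x = y"
      unfolding x y using direct_sum_indecomposable_inj by blast
  qed
  show "(\<lambda>(a, \<sigma>, \<tau>). direct_sum \<sigma> \<tau>) ` (SIGMA a:{1..<n}. sep_sum_indecomposables a \<times> sep_perms (n - a))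
      = {\<pi> \<in> sep_perms n. sum_decomposable \<pi>}"
  proof (intro equalityI subsetI)
    fix \<pi> assume "\<pi> \<in> (\<lambda>(a, \<sigma>, \<tau>). direct_sum \<sigma> \<tau>) ` (SIGMA a:{1..<n}. sep_sum_indecomposables a \<times> sep_perms (n - a))"
    then obtain a \<sigma> \<tau> where \<pi>: "\<pi> = direct_sum \<sigma> \<tau>" and a: "0 < a" "a < n"
      and \<sigma>: "\<sigma> \<in> sep_perms a" and \<tau>: "\<tau> \<in> sep_perms (n - a)"
      unfolding sep_sum_indecomposables_def by (auto simp: Suc_le_eq)
    have "\<pi> \<in> sep_perms n"
      using sep_perms_direct_sum[OF \<sigma> \<tau>] a unfolding \<pi> by simp
    moreover have "sum_decomposable \<pi>"
      unfolding \<pi> using sum_decomposable_direct_sum[of \<sigma> a \<tau> "n - a"] \<sigma> \<tau> a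
      by (simp add: sep_perms_perms)
    ultimately show "\<pi> \<in> {\<pi> \<in> sep_perms n. sum_decomposable \<pi>}"
      by simp
  next
    fix \<pi> assume "\<pi> \<in> {\<pi> \<in> sep_perms n. sum_decomposable \<pi>}"
    then have "\<pi> \<in> sep_perms n" "sum_decomposable \<pi>"
      by simp_all
    then obtain k \<sigma> \<tau> where "k \<in> {1..<n}" "\<sigma> \<in> sep_sum_indecomposables k" "\<tau> \<in> sep_perms (n - k)"
      and "\<pi> = direct_sum \<sigma> \<tau>"
      by (rule sum_decomposableE)
    then show "\<pi> \<in> (\<lambda>(a, \<sigma>, \<tau>). direct_sum \<sigma> \<tau>) ` (SIGMA a:{1..<n}. sep_sum_indecomposables a \<times> sep_perms (n - a))"
      by (intro image_eqI[of _ _ "(k, \<sigma>, \<tau>)"]) simp_all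
  qed
qed

text \<open>
  Obtained from the direct-sum decomposition by reversal, so the \<ominus>-indecomposable block
  comes last; for the generating functions the order of the factors does not matter.
\<close>

lemma bij_betw_skew_sum:
  "bij_betw (\<lambda>(a, \<sigma>, \<tau>). skew_sum \<sigma> \<tau>)
     (SIGMA a:{1..<n}. sep_perms a \<times> sep_skew_indecomposables (n - a))
     {\<pi> \<in> sep_perms n. skew_decomposable \<pi>}"
proof -
  have rev_indec: "\<tau> \<in> sep_sum_indecomposables m \<longleftrightarrow> rev \<tau> \<in> sep_skew_indecomposables m" for \<tau> m
    using sum_decomposable_rev[of "rev \<tau>" m] sep_perms_perms
    unfolding sep_sum_indecomposables_def sep_skew_indecomposables_def by auto
  define swap where "swap = (\<lambda>(a, \<sigma> :: nat list, \<tau> :: nat list). (n - a, rev \<tau>, rev \<sigma>))"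
  have "bij_betw swap (SIGMA a:{1..<n}. sep_perms a \<times> sep_skew_indecomposables (n - a))
      (SIGMA a:{1..<n}. sep_sum_indecomposables a \<times> sep_perms (n - a))"
    by (rule bij_betw_byWitness[where f' = swap]) (auto simp: swap_def rev_indec)
  moreover note bij_betw_direct_sum[of n]
  moreover have "bij_betw rev {\<pi> \<in> sep_perms n. sum_decomposable \<pi>} {\<pi> \<in> sep_perms n. skew_decomposable \<pi>}"
    using sum_decomposable_rev[of "rev _" n] sep_perms_perms
    by (intro bij_betw_byWitness[where f' = rev]) auto
  ultimately have "bij_betw (rev \<circ> (\<lambda>(a, \<sigma>, \<tau>). direct_sum \<sigma> \<tau>) \<circ> swap)
      (SIGMA a:{1..<n}. sep_perms a \<times> sep_skew_indecomposables (n - a))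
      {\<pi> \<in> sep_perms n. skew_decomposable \<pi>}"
    by (blast intro: bij_betw_trans)
  moreover have "rev \<circ> (\<lambda>(a, \<sigma>, \<tau>). direct_sum \<sigma> \<tau>) \<circ> swap = (\<lambda>(a, \<sigma>, \<tau>). skew_sum \<sigma> \<tau>)"
    by (auto simp: swap_def rev_direct_sum)
  ultimately show ?thesis
    by simp
qed

section \<open>The descent generating function\<close>

lemma des_Cons: "des (x # xs) = des xs + (if xs \<noteq> [] \<and> hd xs < x then 1 else 0)"
proof -
  let ?S = "{i. Suc i < length xs \<and> xs ! Suc i < xs ! i}"
  have eq: "{i. Suc i < length (x # xs) \<and> (x # xs) ! Suc i < (x # xs) ! i}
     = (if xs \<noteq> [] \<and> hd xs < x then {0} else {}) \<union> Suc ` ?S"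
  proof (rule set_eqI)
    fix i
    show "i \<in> {i. Suc i < length (x # xs) \<and> (x # xs) ! Suc i < (x # xs) ! i}
        \<longleftrightarrow> i \<in> (if xs \<noteq> [] \<and> hd xs < x then {0} else {}) \<union> Suc ` ?S"
      by (cases i) (auto simp: hd_conv_nth)
  qed
  have "finite ?S"
    by (rule finite_subset[of _ "{..<length xs}"]) auto
  then show ?thesis
    unfolding des_def eq by (simp add: card_image)
qed

lemma des_append:
  "des (xs @ ys) = des xs + des ys + (if xs \<noteq> [] \<and> ys \<noteq> [] \<and> hd ys < last xs then 1 else 0)"
proof (induction xs)
  case (Cons x xs)
  then show ?case
    by (cases "xs = []") (simp_all add: des_Cons)
qed (simp add: des_def)

lemma des_map_strict_mono:
  assumes "strict_mono_on (set xs) h"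
  shows "des (map h xs) = des xs"
proof -
  have "map h xs ! Suc i < map h xs ! i \<longleftrightarrow> xs ! Suc i < xs ! i" if "Suc i < length xs" for i
    using strict_mono_on_less[OF assms] that by simp
  then show ?thesis
    unfolding des_def length_map by (intro arg_cong[where f = card] Collect_cong) blast
qed

lemma des_direct_sum:
  assumes "\<sigma> \<in> perms a" "\<tau> \<in> perms b" "0 < a" "0 < b"
  shows "des (direct_sum \<sigma> \<tau>) = des \<sigma> + des \<tau>"
proof -
  have "\<sigma> \<noteq> []" "\<tau> \<noteq> []" "length \<sigma> = a"
    using assms perms_length by fastforce+
  moreover have "last \<sigma> \<le> a"
    using perms_nth[OF assms(1), of "a - 1"] \<open>\<sigma> \<noteq> []\<close> \<open>length \<sigma> = a\<close> assms(3)
    by (simp add: last_conv_nth)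
  ultimately show ?thesis
    unfolding direct_sum_def
    by (simp add: des_append des_map_strict_mono strict_mono_on_def hd_map)
qed

lemma des_skew_sum:
  assumes "\<sigma> \<in> perms a" "\<tau> \<in> perms b" "0 < a" "0 < b"
  shows "des (skew_sum \<sigma> \<tau>) = des \<sigma> + des \<tau> + 1"
proof -
  have "\<sigma> \<noteq> []" "\<tau> \<noteq> []" "length \<tau> = b"
    using assms perms_length by fastforce+
  moreover have "hd \<tau> \<le> b" "1 \<le> last \<sigma>"
    using perms_nth[OF assms(2), of 0] perms_nth[OF assms(1), of "a - 1"] \<open>\<tau> \<noteq> []\<close> \<open>\<sigma> \<noteq> []\<close>
      perms_length[OF assms(1)] assms(3,4) by (simp_all add: hd_conv_nth last_conv_nth)
  ultimately show ?thesis
    unfolding skew_sum_def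
    by (simp add: des_append des_map_strict_mono strict_mono_on_def last_map)
qed

definition descent_poly :: "nat list set \<Rightarrow> int poly" where
  "descent_poly S = (\<Sum>\<pi>\<in>S. monom 1 (des \<pi>))"

lemma descent_poly_decomposition:
  fixes n :: nat
  assumes bij: "bij_betw (\<lambda>(a, \<sigma>, \<tau>). f \<sigma> \<tau>) (SIGMA a:{1..<n}. S a \<times> T (n - a)) D"
    and des: "\<And>a \<sigma> \<tau>. a \<in> {1..<n} \<Longrightarrow> \<sigma> \<in> S a \<Longrightarrow> \<tau> \<in> T (n - a) \<Longrightarrow> des (f \<sigma> \<tau>) = des \<sigma> + des \<tau> + c"
    and fin: "\<And>a. finite (S a)" "\<And>a. finite (T a)"
  shows "descent_poly D = monom (1::int) c * (\<Sum>a\<in>{1..<n}. descent_poly (S a) * descent_poly (T (n - a)))"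
proof -
  have "descent_poly D = (\<Sum>x\<in>(SIGMA a:{1..<n}. S a \<times> T (n - a)). monom 1 (des ((\<lambda>(a, \<sigma>, \<tau>). f \<sigma> \<tau>) x)))"
    unfolding descent_poly_def by (rule sum.reindex_bij_betw[OF bij, symmetric])
  also have "\<dots> = (\<Sum>(a, \<sigma>, \<tau>)\<in>(SIGMA a:{1..<n}. S a \<times> T (n - a)). monom 1 (des (f \<sigma> \<tau>)))"
    by (rule sum.cong) (auto split: prod.splits)
  also have "\<dots> = (\<Sum>a\<in>{1..<n}. \<Sum>(\<sigma>, \<tau>)\<in>S a \<times> T (n - a). monom 1 (des (f \<sigma> \<tau>)))"
    by (subst sum.Sigma) (auto simp: fin)
  also have "\<dots> = (\<Sum>a\<in>{1..<n}. \<Sum>\<sigma>\<in>S a. \<Sum>\<tau>\<in>T (n - a). monom (1::int) c * (monom 1 (des \<sigma>) * monom 1 (des \<tau>)))"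
  proof (intro sum.cong refl)
    fix a assume "a \<in> {1..<n}"
    then have "(\<Sum>(\<sigma>, \<tau>)\<in>S a \<times> T (n - a). monom 1 (des (f \<sigma> \<tau>)))
        = (\<Sum>(\<sigma>, \<tau>)\<in>S a \<times> T (n - a). monom (1::int) c * (monom 1 (des \<sigma>) * monom 1 (des \<tau>)))"
      by (intro sum.cong refl) (auto simp: des mult_monom add_ac)
    then show "(\<Sum>(\<sigma>, \<tau>)\<in>S a \<times> T (n - a). monom 1 (des (f \<sigma> \<tau>)))
        = (\<Sum>\<sigma>\<in>S a. \<Sum>\<tau>\<in>T (n - a). monom (1::int) c * (monom 1 (des \<sigma>) * monom 1 (des \<tau>)))"
      by (simp add: sum.cartesian_product)
  qed
  also have "\<dots> = monom (1::int) c * (\<Sum>a\<in>{1..<n}. descent_poly (S a) * descent_poly (T (n - a)))"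
    unfolding descent_poly_def sum_product by (simp only: sum_distrib_left)
  finally show ?thesis .
qed

lemma descent_poly_partition:
  assumes "A = B \<union> C" "B \<inter> C = {}" "finite A"
  shows "descent_poly A = descent_poly B + descent_poly C"
  unfolding descent_poly_def assms(1) using assms by (intro sum.union_disjoint) auto

definition descent_gf :: "(nat \<Rightarrow> nat list set) \<Rightarrow> int poly fps" where
  "descent_gf S = Abs_fps (\<lambda>n. if n = 0 then 0 else descent_poly (S n))"

lemma fps_mult_nth_without_constants:
  fixes F G :: "'a::comm_semiring_1 fps"
  assumes "F $ 0 = 0" "G $ 0 = 0"
  shows "(F * G) $ n = (\<Sum>a\<in>{1..<n}. F $ a * G $ (n - a))"
  unfolding fps_mult_nth
proof (rule sum.mono_neutral_right)
  show "\<forall>i\<in>{0..n} - {1..<n}. F $ i * G $ (n - i) = 0"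
    using assms by (auto simp: not_less_eq_eq)
qed auto

lemma descent_gf_mult_nth:
  "(descent_gf S * descent_gf T) $ n = (\<Sum>a\<in>{1..<n}. descent_poly (S a) * descent_poly (T (n - a)))"
  by (subst fps_mult_nth_without_constants) (auto simp: descent_gf_def intro: sum.cong)

lemma descent_gf_sum_equation:
  "descent_gf sep_perms = descent_gf sep_sum_indecomposables * (1 + descent_gf sep_perms)"
proof (rule fps_ext)
  fix n :: nat
  show "descent_gf sep_perms $ n = (descent_gf sep_sum_indecomposables * (1 + descent_gf sep_perms)) $ n"
  proof (cases "n = 0")
    case False
    have "descent_poly {\<pi> \<in> sep_perms n. sum_decomposable \<pi>} = (descent_gf sep_sum_indecomposables * descent_gf sep_perms) $ n"
      unfolding descent_gf_mult_nth
    proof (subst descent_poly_decomposition[OF bij_betw_direct_sum, where c = 0])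
      fix a \<sigma> \<tau> assume "a \<in> {1..<n}" "\<sigma> \<in> sep_sum_indecomposables a" "\<tau> \<in> sep_perms (n - a)"
      then show "des (direct_sum \<sigma> \<tau>) = des \<sigma> + des \<tau> + 0"
        using des_direct_sum[of \<sigma> a \<tau> "n - a"] by (simp add: sep_sum_indecomposables_def sep_perms_def)
    qed (simp_all add: finite_sep_perms sep_sum_indecomposables_def)
    moreover have "descent_poly (sep_perms n)
        = descent_poly (sep_sum_indecomposables n) + descent_poly {\<pi> \<in> sep_perms n. sum_decomposable \<pi>}"
      by (rule descent_poly_partition) (auto simp: sep_sum_indecomposables_def finite_sep_perms)
    ultimately show ?thesis
      using False by (simp add: descent_gf_def algebra_simps)
  qed (simp add: descent_gf_def)
qed

lemma descent_gf_skew_equation: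
  "descent_gf sep_perms = descent_gf sep_skew_indecomposables * (1 + fps_const [:0, 1:] * descent_gf sep_perms)"
proof (rule fps_ext)
  fix n :: nat
  show "descent_gf sep_perms $ n
      = (descent_gf sep_skew_indecomposables * (1 + fps_const [:0, 1:] * descent_gf sep_perms)) $ n"
  proof (cases "n = 0")
    case False
    have "descent_poly {\<pi> \<in> sep_perms n. skew_decomposable \<pi>}
        = [:0, 1:] * (descent_gf sep_perms * descent_gf sep_skew_indecomposables) $ n"
      unfolding descent_gf_mult_nth
    proof (subst descent_poly_decomposition[OF bij_betw_skew_sum, where c = 1])
      fix a \<sigma> \<tau> assume "a \<in> {1..<n}" "\<sigma> \<in> sep_perms a" "\<tau> \<in> sep_skew_indecomposables (n - a)"
      then show "des (skew_sum \<sigma> \<tau>) = des \<sigma> + des \<tau> + 1"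
        using des_skew_sum[of \<sigma> a \<tau> "n - a"] by (simp add: sep_skew_indecomposables_def sep_perms_def)
    qed (simp_all add: finite_sep_perms sep_skew_indecomposables_def monom_Suc pCons_one)
    moreover have "descent_poly (sep_perms n)
        = descent_poly (sep_skew_indecomposables n) + descent_poly {\<pi> \<in> sep_perms n. skew_decomposable \<pi>}"
      by (rule descent_poly_partition) (auto simp: sep_skew_indecomposables_def finite_sep_perms)
    ultimately show ?thesis
      using False by (simp add: descent_gf_def algebra_simps)
  qed (simp add: descent_gf_def)
qed

lemma descent_gf_indecomposables:
  "descent_gf sep_sum_indecomposables + descent_gf sep_skew_indecomposables = descent_gf sep_perms + fps_X"
proof (rule fps_ext)
  fix n :: nat
  consider "n = 0" | "n = 1" | "2 \<le> n"
    by linarith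
  then show "(descent_gf sep_sum_indecomposables + descent_gf sep_skew_indecomposables) $ n
      = (descent_gf sep_perms + fps_X) $ n"
  proof cases
    case 2
    have "sep_sum_indecomposables 1 = {[1]}" "sep_skew_indecomposables 1 = {[1]}"
      unfolding sep_sum_indecomposables_def sep_skew_indecomposables_def sep_perms_one
      by (auto simp: sum_decomposable_def skew_decomposable_def)
    then have "descent_poly (sep_sum_indecomposables 1) = 1" "descent_poly (sep_skew_indecomposables 1) = 1"
      "descent_poly (sep_perms 1) = 1"
      unfolding descent_poly_def sep_perms_one by (simp_all add: des_def)
    then show ?thesis
      unfolding 2 by (simp add: descent_gf_def)
  next
    case 3
    have "descent_poly (sep_perms n)
        = descent_poly (sep_sum_indecomposables n) + descent_poly (sep_skew_indecomposables n)"
    proof (rule descent_poly_partition)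
      show "sep_perms n = sep_sum_indecomposables n \<union> sep_skew_indecomposables n"
        using not_sum_and_skew_decomposable sep_perms_perms
        unfolding sep_sum_indecomposables_def sep_skew_indecomposables_def by blast
      show "sep_sum_indecomposables n \<inter> sep_skew_indecomposables n = {}"
        using sep_perms_decomposable[OF 3]
        unfolding sep_sum_indecomposables_def sep_skew_indecomposables_def by blast
    qed (rule finite_sep_perms)
    then show ?thesis
      using 3 by (simp add: descent_gf_def)
  qed (simp add: descent_gf_def)
qed

lemma descent_gf_cubic:
  defines "F \<equiv> descent_gf sep_perms" and "t \<equiv> fps_const [:0, 1:]"
  shows "F = fps_X + (1 + t) * fps_X * F + t * fps_X * F ^ 2 + t * F ^ 3"
proof -
  define B C where "B = descent_gf sep_sum_indecomposables" and "C = descent_gf sep_skew_indecomposables"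
  have "(F + fps_X) * ((1 + F) * (1 + t * F)) = (B + C) * ((1 + F) * (1 + t * F))"
    using descent_gf_indecomposables unfolding B_def C_def F_def by simp
  also have "\<dots> = (B * (1 + F)) * (1 + t * F) + (C * (1 + t * F)) * (1 + F)"
    by (simp add: algebra_simps)
  also have "\<dots> = F * (1 + t * F) + F * (1 + F)"
    using descent_gf_sum_equation descent_gf_skew_equation unfolding B_def C_def F_def t_def
    by (simp only:)
  finally show ?thesis
    by algebra
qed

section \<open>Binary trees weighted by their right chains\<close>

text \<open>
  A right chain of length l gets weight 2 t^(l/2) for even l and t^((l-1)/2) (1 + t) for odd l,
  so that a tree T weighs 2^r_e(T) t^k (1 + t)^r_o(T) with 2k + r_o(T) nodes.
\<close>

definition chain_weight :: "nat \<Rightarrow> int poly" where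
  "chain_weight l = (if l = 0 then 1 else if odd l then [:0, 1:] ^ ((l - 1) div 2) * [:1, 1:]
     else smult 2 ([:0, 1:] ^ (l div 2)))"

text \<open>
  tree_weight s T is the weight of T when s nodes of the right chain through its root lie above
  it; that chain is closed off at the leaf reached by going right.
\<close>

fun tree_weight :: "nat \<Rightarrow> unit tree \<Rightarrow> int poly" where
  "tree_weight s Leaf = chain_weight s"
| "tree_weight s (Node l x r) = tree_weight 0 l * tree_weight (Suc s) r"

lemma tree_weight_chains:
  "tree_weight s T = chain_weight (rlen T + s) * prod_list (map chain_weight (chains False T))"
proof (induction T arbitrary: s)
  case (Node l x r)
  have "prod_list (map chain_weight (chains True l)) = chain_weight (rlen l) * prod_list (map chain_weight (chains False l))"
    by (cases l) (simp_all add: chain_weight_def)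
  with Node.IH show ?case
    by (simp add: algebra_simps)
qed simp

lemma tree_weight_0: "tree_weight 0 T = prod_list (map chain_weight (chains True T))"
  by (cases T) (simp_all add: tree_weight_chains chain_weight_def)

lemma chain_weight_add_two:
  assumes "0 < l"
  shows "chain_weight (l + 2) = [:0, 1:] * chain_weight l"
proof (cases "odd l")
  case True
  then have "(l + 2 - 1) div 2 = Suc ((l - 1) div 2)"
    by (auto elim!: oddE)
  then show ?thesis
    using True assms unfolding chain_weight_def by (simp add: algebra_simps)
next
  case False
  then show ?thesis
    using assms unfolding chain_weight_def by (simp add: algebra_simps)
qed

lemma tree_weight_two:
  "tree_weight 2 T = [:0, 1:] * tree_weight 0 T + (if T = Leaf then [:0, 1:] else 0)"
proof (cases T)
  case Leaf
  then show ?thesis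
    by (simp add: chain_weight_def)
next
  case (Node l x r)
  then show ?thesis
    using chain_weight_add_two[of "rlen T"] by (simp add: tree_weight_chains)
qed

definition trees :: "nat \<Rightarrow> unit tree set" where
  "trees m = {T. size T = m}"

lemma trees_0: "trees 0 = {Leaf}"
  unfolding trees_def by auto

lemma bij_betw_Node:
  "bij_betw (\<lambda>(a, l, r). Node l () r) (SIGMA a:{..m}. trees a \<times> trees (m - a)) (trees (Suc m))"
proof (rule bij_betw_imageI)
  show "inj_on (\<lambda>(a, l, r). Node l () r) (SIGMA a:{..m}. trees a \<times> trees (m - a))"
    unfolding inj_on_def trees_def by auto
  show "(\<lambda>(a, l, r). Node l () r) ` (SIGMA a:{..m}. trees a \<times> trees (m - a)) = trees (Suc m)"
  proof (intro equalityI subsetI)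
    fix T assume "T \<in> trees (Suc m)"
    then obtain l r where "T = Node l () r" "size l + size r = m"
      unfolding trees_def by (cases T) auto
    then show "T \<in> (\<lambda>(a, l, r). Node l () r) ` (SIGMA a:{..m}. trees a \<times> trees (m - a))"
      unfolding trees_def by (intro image_eqI[of _ _ "(size l, l, r)"]) auto
  qed (auto simp: trees_def)
qed

lemma finite_trees: "finite (trees m)"
proof (induction m rule: less_induct)
  case (less m)
  show ?case
  proof (cases m)
    case (Suc m')
    then have "finite (SIGMA a:{..m'}. trees a \<times> trees (m' - a))"
      using less by auto
    then show ?thesis
      using bij_betw_finite[OF bij_betw_Node] Suc by blast
  qed (simp add: trees_0)
qed

lemma sum_trees_Suc:
  "(\<Sum>T\<in>trees (Suc m). tree_weight s T)
     = (\<Sum>a\<le>m. (\<Sum>l\<in>trees a. tree_weight 0 l) * (\<Sum>r\<in>trees (m - a). tree_weight (Suc s) r))"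
proof -
  have "(\<Sum>T\<in>trees (Suc m). tree_weight s T)
      = (\<Sum>x\<in>(SIGMA a:{..m}. trees a \<times> trees (m - a)). tree_weight s ((\<lambda>(a, l, r). Node l () r) x))"
    by (rule sum.reindex_bij_betw[OF bij_betw_Node, symmetric])
  also have "\<dots> = (\<Sum>a\<le>m. \<Sum>(l, r)\<in>trees a \<times> trees (m - a). tree_weight 0 l * tree_weight (Suc s) r)"
    by (subst sum.Sigma) (auto simp: finite_trees split: prod.split intro!: sum.cong)
  also have "\<dots> = (\<Sum>a\<le>m. (\<Sum>l\<in>trees a. tree_weight 0 l) * (\<Sum>r\<in>trees (m - a). tree_weight (Suc s) r))"
    by (simp add: sum_product sum.cartesian_product)
  finally show ?thesis .
qed

definition tree_gf :: "nat \<Rightarrow> int poly fps" where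
  "tree_gf s = Abs_fps (\<lambda>m. \<Sum>T\<in>trees m. tree_weight s T)"

lemma tree_gf_recursion: "tree_gf s = fps_const (chain_weight s) + fps_X * (tree_gf 0 * tree_gf (Suc s))"
proof (rule fps_ext)
  fix m
  show "tree_gf s $ m = (fps_const (chain_weight s) + fps_X * (tree_gf 0 * tree_gf (Suc s))) $ m"
  proof (cases m)
    case (Suc m')
    then have "(fps_X * (tree_gf 0 * tree_gf (Suc s))) $ m = (tree_gf 0 * tree_gf (Suc s)) $ m'"
      by simp
    then show ?thesis
      using Suc by (simp add: tree_gf_def sum_trees_Suc fps_mult_nth atLeast0AtMost)
  qed (simp add: tree_gf_def trees_0)
qed

lemma tree_gf_two: "tree_gf 2 = fps_const [:0, 1:] * (tree_gf 0 + 1)"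
proof (rule fps_ext)
  fix m
  define t :: "int poly" where "t = [:0, 1:]"
  have leaf: "(\<Sum>T\<in>trees m. if T = Leaf then t else 0) = (if m = 0 then t else 0)"
    by (cases m) (auto simp: trees_0 trees_def intro!: sum.neutral)
  show "tree_gf 2 $ m = (fps_const [:0, 1:] * (tree_gf 0 + 1)) $ m"
    unfolding t_def[symmetric] using tree_weight_two[folded t_def] leaf
    by (simp add: tree_gf_def sum.distrib sum_distrib_left distrib_left)
qed

lemma tree_gf_cubic:
  defines "F \<equiv> fps_X * tree_gf 0" and "t \<equiv> fps_const [:0, 1:]"
  shows "F = fps_X + (1 + t) * fps_X * F + t * fps_X * F ^ 2 + t * F ^ 3"
proof -
  have "fps_const (chain_weight 1) = 1 + t"
    unfolding t_def by (rule fps_ext) (simp add: chain_weight_def one_pCons)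
  then have Q: "tree_gf 1 = 1 + t + fps_X * (tree_gf 0 * (t * (tree_gf 0 + 1)))"
    using tree_gf_recursion[of 1] tree_gf_two unfolding t_def by (simp add: numeral_2_eq_2)
  have P: "tree_gf 0 = 1 + fps_X * (tree_gf 0 * tree_gf 1)"
    using tree_gf_recursion[of 0] by (simp add: chain_weight_def)
  have "F = fps_X * (1 + fps_X * (tree_gf 0 * (1 + t + fps_X * (tree_gf 0 * (t * (tree_gf 0 + 1))))))"
    unfolding F_def by (subst (1) P, subst Q) (rule refl)
  then show ?thesis
    unfolding F_def by algebra
qed

section \<open>Comparison of coefficients\<close>

lemma fps_cubic_unique:
  fixes F G t :: "'a::idom fps"
  assumes "F $ 0 = 0" "G $ 0 = 0"
    and "F = fps_X + (1 + t) * fps_X * F + t * fps_X * F ^ 2 + t * F ^ 3"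
    and "G = fps_X + (1 + t) * fps_X * G + t * fps_X * G ^ 2 + t * G ^ 3"
  shows "F = G"
proof -
  define E where "E = (1 + t) * fps_X + t * fps_X * (F + G) + t * (F * F + F * G + G * G)"
  have "F - G = (fps_X + (1 + t) * fps_X * F + t * fps_X * F ^ 2 + t * F ^ 3)
      - (fps_X + (1 + t) * fps_X * G + t * fps_X * G ^ 2 + t * G ^ 3)"
    using assms(3,4) by simp
  also have "\<dots> = (F - G) * E"
    unfolding E_def by algebra
  finally have "F - G = (F - G) * E" .
  then have "(F - G) * (1 - E) = 0"
    by (simp add: algebra_simps)
  moreover have "(1 - E) $ 0 = 1"
    unfolding E_def using assms(1,2) by simp
  then have "1 - E \<noteq> 0"
    by auto
  ultimately show ?thesis
    by simp
qed

theorem descent_poly_sep_perms_eq_trees: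
  assumes "n \<ge> 1"
  shows "descent_poly (sep_perms n) = (\<Sum>T\<in>trees (n - 1). tree_weight 0 T)"
proof -
  have "descent_gf sep_perms = fps_X * tree_gf 0"
    by (rule fps_cubic_unique[OF _ _ descent_gf_cubic tree_gf_cubic]) (simp_all add: descent_gf_def)
  then have "descent_gf sep_perms $ n = (fps_X * tree_gf 0) $ n"
    by simp
  then show ?thesis
    using assms by (simp add: descent_gf_def tree_gf_def)
qed

lemma sum_list_chains: "sum_list (chains b T) + (if b then 0 else rlen T) = size T"
proof (induction T arbitrary: b)
  case (Node l x r)
  then show ?case
    using Node.IH(1)[of True] Node.IH(2)[of False] by auto
qed simp

lemma chains_pos: "\<forall>l\<in>set (chains b T). 0 < l"
  by (induction T arbitrary: b) auto

lemma chain_weights_prod: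
  assumes "\<forall>l\<in>set ls. 0 < l"
  shows "\<exists>e. sum_list ls = length (filter odd ls) + 2 * e \<and>
    prod_list (map chain_weight ls) = smult (2 ^ length (filter even ls)) ([:0, 1:] ^ e * [:1, 1:] ^ length (filter odd ls))"
proof -
  define x y :: "int poly" where "x = [:0, 1:]" and "y = [:1, 1:]"
  have odd_weight: "chain_weight (2 * d + 1) = x ^ d * y" for d
    unfolding chain_weight_def x_def y_def by simp
  have even_weight: "chain_weight (2 * d) = smult 2 (x ^ d)" if "d \<noteq> 0" for d
    unfolding chain_weight_def x_def using that by simp
  have "\<exists>e. sum_list ls = length (filter odd ls) + 2 * e \<and>
      prod_list (map chain_weight ls) = smult (2 ^ length (filter even ls)) (x ^ e * y ^ length (filter odd ls))"
    using assms
  proof (induction ls)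
    case (Cons l ls)
    then obtain e where e: "sum_list ls = length (filter odd ls) + 2 * e"
      "prod_list (map chain_weight ls) = smult (2 ^ length (filter even ls)) (x ^ e * y ^ length (filter odd ls))"
      by auto
    show ?case
    proof (cases "odd l")
      case True
      then obtain d where "l = 2 * d + 1"
        by (metis oddE)
      then show ?thesis
        using True e odd_weight[of d] by (intro exI[of _ "d + e"]) (simp add: power_add mult_ac)
    next
      case False
      then obtain d where "l = 2 * d"
        by (metis evenE)
      moreover have "d \<noteq> 0"
        using Cons.prems calculation by auto
      ultimately show ?thesis
        using False e even_weight[of d] by (intro exI[of _ "d + e"]) (simp add: power_add mult_ac)
    qed
  qed simp
  then show ?thesis
    unfolding x_def y_def .
qed

lemma tree_weight_0_eq:
  "\<exists>e. size T = r_o T + 2 * e \<and> tree_weight 0 T = smult (2 ^ r_e T) ([:0, 1:] ^ e * [:1, 1:] ^ r_o T)"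
  using chain_weights_prod[OF chains_pos[of True T]] sum_list_chains[of True T]
  unfolding tree_weight_0 r_o_def r_e_def by simp

lemma sum_trees_tree_weight:
  "(\<Sum>T\<in>trees m. tree_weight 0 T) =
     (\<Sum>k\<le>m div 2. smult (\<Sum>T\<in>{T \<in> trees m. r_o T = m - 2 * k}. 2 ^ r_e T) ([:0, 1:] ^ k * [:1, 1:] ^ (m - 2 * k)))"
proof -
  define g where "g T = (m - r_o T) div 2" for T
  have weight: "r_o T = m - 2 * g T" "g T \<le> m div 2"
    "tree_weight 0 T = smult (2 ^ r_e T) ([:0, 1:] ^ g T * [:1, 1:] ^ (m - 2 * g T))" if "T \<in> trees m" for T
    using tree_weight_0_eq[of T] that unfolding trees_def g_def by auto
  have "(\<Sum>k\<le>m div 2. smult (\<Sum>T\<in>{T \<in> trees m. r_o T = m - 2 * k}. 2 ^ r_e T) ([:0, 1:] ^ k * [:1, 1:] ^ (m - 2 * k)))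
      = (\<Sum>k\<le>m div 2. \<Sum>T\<in>{T \<in> trees m. g T = k}. tree_weight 0 T)"
  proof (intro sum.cong refl)
    fix k assume "k \<in> {..m div 2}"
    then have "{T \<in> trees m. r_o T = m - 2 * k} = {T \<in> trees m. g T = k}"
      using weight(1,2) by fastforce
    then show "smult (\<Sum>T\<in>{T \<in> trees m. r_o T = m - 2 * k}. 2 ^ r_e T) ([:0, 1:] ^ k * [:1, 1:] ^ (m - 2 * k))
        = (\<Sum>T\<in>{T \<in> trees m. g T = k}. tree_weight 0 T)"
      using weight(3) by (simp add: smult_sum)
  qed
  also have "\<dots> = (\<Sum>T\<in>trees m. tree_weight 0 T)"
    using weight(2) by (intro sum.group finite_trees) auto
  finally show ?thesis ..
qed

lemma coeffs_eq_0_if_sum_eq_0: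
  fixes c :: "nat \<Rightarrow> 'a::comm_ring_1" and p :: "nat \<Rightarrow> 'a poly"
  assumes sum: "(\<Sum>k\<le>K. smult (c k) ([:0, 1:] ^ k * p k)) = 0" and one: "\<And>k. coeff (p k) 0 = 1"
  shows "\<forall>k\<le>K. c k = 0"
proof (rule ccontr)
  assume "\<not> (\<forall>k\<le>K. c k = 0)"
  then have ex: "\<exists>k. k \<le> K \<and> c k \<noteq> 0"
    by auto
  define m where "m = (LEAST k. k \<le> K \<and> c k \<noteq> 0)"
  have m: "m \<le> K" "c m \<noteq> 0"
    using LeastI_ex[OF ex] unfolding m_def by auto
  have below: "c k = 0" if "k < m" for k
    using not_less_Least[of k "\<lambda>k. k \<le> K \<and> c k \<noteq> 0"] m(1) that unfolding m_def by auto
  have "coeff (smult (c k) ([:0, 1:] ^ k * p k)) m = (if k = m then c m else 0)" for k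
    using below[of k] one[of k] by (auto simp: monom_altdef[of 1, simplified, symmetric] coeff_monom_mult)
  then have "coeff (\<Sum>k\<le>K. smult (c k) ([:0, 1:] ^ k * p k)) m = c m"
    using m(1) by (simp add: coeff_sum)
  then show False
    using sum m(2) by simp
qed

theorem theorem5p7:
  fixes n :: nat and \<gamma> :: "nat \<Rightarrow> int"
  assumes "n \<ge> 1"
    and "(\<Sum>\<pi>\<in>sep_perms n. monom (1::int) (des \<pi>)) =
         (\<Sum>k\<le>(n - 1) div 2. smult (\<gamma> k) ([:0, 1:] ^ k * [:1, 1:] ^ (n - 1 - 2 * k)))"
  shows "\<forall>k\<le>(n - 1) div 2.
           \<gamma> k = (\<Sum>T\<in>{T \<in> btrees n. r_o T = n - 1 - 2 * k}. (2::int) ^ r_e T)"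
proof -
  define \<gamma>' where "\<gamma>' k = (\<Sum>T\<in>{T \<in> btrees n. r_o T = n - 1 - 2 * k}. (2::int) ^ r_e T)" for k
  have "(\<Sum>k\<le>(n - 1) div 2. smult (\<gamma> k) ([:0, 1:] ^ k * [:1, 1:] ^ (n - 1 - 2 * k)))
      = (\<Sum>k\<le>(n - 1) div 2. smult (\<gamma>' k) ([:0, 1:] ^ k * [:1, 1:] ^ (n - 1 - 2 * k)))"
    using assms(2) descent_poly_sep_perms_eq_trees[OF assms(1)] sum_trees_tree_weight[of "n - 1"]
    unfolding descent_poly_def \<gamma>'_def btrees_def trees_def by simp
  then have "(\<Sum>k\<le>(n - 1) div 2. smult (\<gamma> k - \<gamma>' k) ([:0, 1:] ^ k * [:1, 1:] ^ (n - 1 - 2 * k))) = 0"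
    by (simp add: smult_diff_left sum_subtractf)
  then have "\<forall>k\<le>(n - 1) div 2. \<gamma> k - \<gamma>' k = 0"
    by (rule coeffs_eq_0_if_sum_eq_0) (simp add: coeff_0_power)
  then show ?thesis
    unfolding \<gamma>'_def by simp
qed

end
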